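(* Let $k\ge 2$, positive integers $n_1,\dots,n_k$, and functions $f_{ij}:\mathbb{R}^{n_j}\to\mathbb{R}^{n_i}$ ($1\le j<i\le k$) be given, and let $\chi_i^*$ ($i=1,\dots,k-1$) be defined by $$\chi_i^*(\nu_{i:k})=\sup_{z_i\in\mathbb{R}^{n_i}}\Big(\nu_i^T z_i+\sum_{j=i+1}^{k}\nu_j^T f_{ji}(z_i)\Big).$$ Let $\|\cdot\|$ be a norm on $\mathbb{R}^{n_1}$ with dual norm $\|\cdot\|_*$, let $x\in\mathbb{R}^{n_1}$, $\epsilon>0$, $\mathcal B(x)=\{x+\Delta:\|\Delta\|\le\epsilon\}$, and $c\in\mathbb{R}^{n_k}$. Suppose that for each $i=1,\dots,k-1$ we are given functions $g_{ij}:\mathbb{R}^{n_j}\to\mathbb{R}^{n_i}$ for $j=i+1,\dots,k$ and a function $h_i:\mathbb{R}^{n_i}\times\cdots\times\mathbb{R}^{n_k}\to\mathbb{R}$ such that for every $\nu_{i+1:k}$, setting $\nu_i=\sum_{j=i+1}^k g_{ij}(\nu_j)$, we have $$\chi_i^*(-\nu_i,\nu_{i+1:k})\le h_i(\nu_{i:k}).$$ Define $\nu_{1:k}$ (the "dual network" applied to $c$) by $\nu_k=-c$ and $\nu_i=\sum_{j=i+1}^{k} g_{ij}(\nu_j)$ for $i=k-1,\dots,1$, and let $$J(x,\nu_{1:k})=-\nu_1^T x-\epsilon\|\nu_1\|_*-\sum_{i=1}^{k-1}h_i(\nu_{i:k}).$$ Then $J(x,\nu_{1:k})$ is a lower bound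 on the value of the problem $$\min\; c^T z_k\quad\text{subject to}\quad z_i=\sum_{j=1}^{i-1}f_{ij}(z_j)\ (i=2,\dots,k),\quad z_1\in\mathcal B(x);$$ that is, $c^T z_k\ge J(x,\nu_{1:k})$ for every feasible $z_{1:k}$.
   Context: Notation: $(\cdot)_{a:b}$ denotes the tuple $((\cdot)_a,\dots,(\cdot)_b)$. The constraints $z_i=\sum_{j<i}f_{ij}(z_j)$ describe a generalized $k$-layer network with arbitrary skip connections and output $z_k$; in the adversarial application $c=e_{y^\star}-e_{y^{\mathrm{targ}}}$ for a true label $y^\star$ and a target label $y^{\mathrm{targ}}$. The dual norm is $\|v\|_*=\sup_{\|\Delta\|\le 1}v^T\Delta$. *)

theory Defs
  imports "HOL-Analysis.Analysis"
begin

text \<open>Vectors of R^n are represented as functions nat => real vanishing from index n on.\<close>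
definition Vec :: "nat \<Rightarrow> (nat \<Rightarrow> real) set" where
  "Vec n = {v. \<forall>m\<ge>n. v m = 0}"

definition ip :: "nat \<Rightarrow> (nat \<Rightarrow> real) \<Rightarrow> (nat \<Rightarrow> real) \<Rightarrow> real" where
  "ip n u v = (\<Sum>m<n. u m * v m)"

definition is_norm_on :: "nat \<Rightarrow> ((nat \<Rightarrow> real) \<Rightarrow> real) \<Rightarrow> bool" where
  "is_norm_on n N \<longleftrightarrow>
     (\<forall>v\<in>Vec n. N v \<ge> 0 \<and> (N v = 0 \<longleftrightarrow> v = (\<lambda>_. 0))) \<and>
     (\<forall>v\<in>Vec n. \<forall>a. N (\<lambda>m. a * v m) = \<bar>a\<bar> * N v) \<and>
     (\<forall>u\<in>Vec n. \<forall>v\<in>Vec n. N (\<lambda>m. u m + v m) \<le> N u + N v)"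

definition dual_norm :: "nat \<Rightarrow> ((nat \<Rightarrow> real) \<Rightarrow> real) \<Rightarrow> (nat \<Rightarrow> real) \<Rightarrow> real" where
  "dual_norm n N v = Sup {ip n v d | d. d \<in> Vec n \<and> N d \<le> 1}"

definition chi_star ::
  "(nat \<Rightarrow> nat) \<Rightarrow> (nat \<Rightarrow> nat \<Rightarrow> (nat \<Rightarrow> real) \<Rightarrow> (nat \<Rightarrow> real)) \<Rightarrow> nat \<Rightarrow> nat
   \<Rightarrow> (nat \<Rightarrow> nat \<Rightarrow> real) \<Rightarrow> ereal" where
  "chi_star n f k i \<nu> =
     (SUP z\<in>Vec (n i). ereal (ip (n i) (\<nu> i) z + (\<Sum>j\<in>{i+1..k}. ip (n j) (\<nu> j) (f j i z))))"

text \<open>Restriction of a tuple to the components i..k (others set to 0), so h_i sees only nu_{i:k}.\<close>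
definition restr :: "nat \<Rightarrow> nat \<Rightarrow> (nat \<Rightarrow> nat \<Rightarrow> real) \<Rightarrow> (nat \<Rightarrow> nat \<Rightarrow> real)" where
  "restr i k \<nu> = (\<lambda>j. if i \<le> j \<and> j \<le> k then \<nu> j else (\<lambda>_. 0))"

end

theory Submission
  imports Defs
begin

text \<open>
  This is weak duality for the Lagrangian of the network equations. For feasible \<open>z\<close>, the
  bound on \<open>\<chi>\<^sub>i\<^sup>*\<close> evaluated at the point \<open>z\<^sub>i\<close> gives
  \<open>-\<nu>\<^sub>i\<^sup>T z\<^sub>i + \<Sum>\<^sub>j\<^sub>>\<^sub>i \<nu>\<^sub>j\<^sup>T f\<^sub>j\<^sub>i(z\<^sub>i) \<le> h\<^sub>i\<close>. Summing over \<open>i\<close> and exchanging the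
  order of summation, the network equations collapse the double sum to \<open>\<Sum>\<^sub>j\<^sub>\<ge>\<^sub>2 \<nu>\<^sub>j\<^sup>T z\<^sub>j\<close>, so
  the left-hand sides telescope to \<open>\<nu>\<^sub>k\<^sup>T z\<^sub>k - \<nu>\<^sub>1\<^sup>T z\<^sub>1 = -c\<^sup>T z\<^sub>k - \<nu>\<^sub>1\<^sup>T z\<^sub>1\<close>, and on the
  ball \<open>\<nu>\<^sub>1\<^sup>T z\<^sub>1 \<le> \<nu>\<^sub>1\<^sup>T x + \<epsilon> \<parallel>\<nu>\<^sub>1\<parallel>\<^sub>*\<close>. The only analytic point is that the supremum
  defining the dual norm is finite: every norm on \<open>\<real>\<^sup>n\<close> dominates a multiple of the
  \<open>\<ell>\<^sub>1\<close> norm, by compactness of the \<open>\<ell>\<^sub>1\<close> unit sphere.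
\<close>

lemma Vec_sum: "(\<And>i. i \<in> A \<Longrightarrow> F i \<in> Vec n) \<Longrightarrow> (\<lambda>m. \<Sum>i\<in>A. F i m) \<in> Vec n"
  by (auto simp: Vec_def)

lemma ip_sum_right: "ip n v (\<lambda>m. \<Sum>i\<in>A. F i m) = (\<Sum>i\<in>A. ip n v (F i))"
  unfolding ip_def sum_distrib_left by (rule sum.swap)

lemma ip_uminus_left: "ip n (\<lambda>m. - u m) v = - ip n u v"
  by (simp add: ip_def sum_negf)

lemma sum_triangle_swap:
  "(\<Sum>i\<in>{a..b}. \<Sum>j\<in>{Suc i..b}. F i j) = (\<Sum>j\<in>{a..b}. \<Sum>i\<in>{a..<j}. F i j)"
proof -
  have "(\<Sum>i\<in>{a..b}. \<Sum>j\<in>{Suc i..b}. F i j) = (\<Sum>i\<in>{a..b}. \<Sum>j | j \<in> {a..b} \<and> i < j. F i j)"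
    by (intro sum.cong) auto
  also have "\<dots> = (\<Sum>j\<in>{a..b}. \<Sum>i | i \<in> {a..b} \<and> i < j. F i j)"
    by (rule sum.swap_restrict) auto
  also have "\<dots> = (\<Sum>j\<in>{a..b}. \<Sum>i\<in>{a..<j}. F i j)"
    by (intro sum.cong) auto
  finally show ?thesis .
qed

lemma bounded_seq_convergent_coords:
  fixes s :: "nat \<Rightarrow> nat \<Rightarrow> real"
  assumes bound: "\<And>j m. \<bar>s j m\<bar> \<le> B"
  shows "\<exists>r l. strict_mono r \<and> (\<forall>m<p. (\<lambda>j. s (r j) m) \<longlonglongrightarrow> l m)"
proof (induction p)
  case 0
  show ?case by (rule exI[of _ id]) (simp add: strict_mono_def)
next
  case (Suc p)
  then obtain r l where r: "strict_mono r" and l: "\<forall>m<p. (\<lambda>j. s (r j) m) \<longlonglongrightarrow> l m"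
    by blast
  have "bounded (range (\<lambda>j. s (r j) p))"
    using bound by (auto simp: bounded_iff intro!: exI[of _ B])
  then obtain l' r' where r': "strict_mono r'" and l': "((\<lambda>j. s (r j) p) \<circ> r') \<longlonglongrightarrow> l'"
    using bounded_imp_convergent_subsequence by blast
  have "(\<lambda>j. s (r (r' j)) m) \<longlonglongrightarrow> (l(p := l')) m" if "m < Suc p" for m
  proof (cases "m = p")
    case True
    with l' show ?thesis by (simp add: o_def)
  next
    case False
    with that l have "(\<lambda>j. s (r j) m) \<longlonglongrightarrow> l m" by auto
    from LIMSEQ_subseq_LIMSEQ[OF this r'] False show ?thesis by (simp add: o_def)
  qed
  moreover have "strict_mono (\<lambda>j. r (r' j))"
    using r r' by (simp add: strict_mono_def)
  ultimately show ?case
    by (intro exI[of _ "r \<circ> r'"] exI[of _ "l(p := l')"]) simp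
qed

definition unit_vec :: "nat \<Rightarrow> nat \<Rightarrow> real" where
  "unit_vec m = (\<lambda>i. if i = m then 1 else 0)"

abbreviation l1_norm :: "nat \<Rightarrow> (nat \<Rightarrow> real) \<Rightarrow> real" where
  "l1_norm n v \<equiv> \<Sum>m<n. \<bar>v m\<bar>"

lemma abs_le_l1_norm: "v \<in> Vec n \<Longrightarrow> \<bar>v m\<bar> \<le> l1_norm n v"
  by (cases "m < n") (auto simp: Vec_def intro: member_le_sum)

locale vec_norm =
  fixes n :: nat and N :: "(nat \<Rightarrow> real) \<Rightarrow> real"
  assumes is_norm: "is_norm_on n N"
begin

lemma nonneg: "v \<in> Vec n \<Longrightarrow> N v \<ge> 0"
  and zero_iff: "v \<in> Vec n \<Longrightarrow> N v = 0 \<longleftrightarrow> v = (\<lambda>_. 0)"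
  and scale: "v \<in> Vec n \<Longrightarrow> N (\<lambda>m. a * v m) = \<bar>a\<bar> * N v"
  and triangle: "u \<in> Vec n \<Longrightarrow> v \<in> Vec n \<Longrightarrow> N (\<lambda>m. u m + v m) \<le> N u + N v"
  using is_norm unfolding is_norm_on_def by blast+

lemma le_weighted_l1_norm:
  assumes d: "d \<in> Vec n"
  shows "N d \<le> (\<Sum>m<n. \<bar>d m\<bar> * N (unit_vec m))"
proof -
  have "N (\<lambda>i. if i < p then d i else 0) \<le> (\<Sum>m<p. \<bar>d m\<bar> * N (unit_vec m))" if "p \<le> n" for p
    using that
  proof (induction p)
    case 0
    have "(\<lambda>_. 0) \<in> Vec n" by (simp add: Vec_def)
    then have "N (\<lambda>_. 0) = 0" using zero_iff by blast
    then show ?case by simp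
  next
    case (Suc p)
    have head: "(\<lambda>i. if i < p then d i else 0) \<in> Vec n" and unit: "unit_vec p \<in> Vec n"
      using Suc.prems by (auto simp: Vec_def unit_vec_def)
    then have scaled: "(\<lambda>m. d p * unit_vec p m) \<in> Vec n"
      by (simp add: Vec_def)
    have "N (\<lambda>i. if i < Suc p then d i else 0)
        = N (\<lambda>m. (if m < p then d m else 0) + d p * unit_vec p m)"
      by (rule arg_cong[where f = N]) (auto simp: unit_vec_def less_Suc_eq)
    also have "\<dots> \<le> N (\<lambda>i. if i < p then d i else 0) + N (\<lambda>m. d p * unit_vec p m)"
      using triangle[OF head scaled] by simp
    also have "\<dots> = N (\<lambda>i. if i < p then d i else 0) + \<bar>d p\<bar> * N (unit_vec p)"
      by (simp add: scale[OF unit])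
    finally show ?case using Suc by simp
  qed
  moreover have "(\<lambda>i. if i < n then d i else 0) = d"
    using d by (auto simp: Vec_def)
  ultimately show ?thesis
    by (metis order_refl)
qed

lemma tendsto_zero_coordwise:
  assumes e: "\<And>j. e j \<in> Vec n" and L: "L \<in> Vec n"
    and lim: "\<And>m. m < n \<Longrightarrow> (\<lambda>j. e j m) \<longlonglongrightarrow> L m"
  shows "(\<lambda>j. N (\<lambda>m. L m - e j m)) \<longlonglongrightarrow> 0"
proof (rule tendsto_sandwich)
  have diff: "(\<lambda>m. L m - e j m) \<in> Vec n" for j
    using e L by (auto simp: Vec_def)
  show "\<forall>\<^sub>F j in sequentially. 0 \<le> N (\<lambda>m. L m - e j m)"
    using nonneg[OF diff] by simp
  show "\<forall>\<^sub>F j in sequentially. N (\<lambda>m. L m - e j m) \<le> (\<Sum>m<n. \<bar>L m - e j m\<bar> * N (unit_vec m))"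
    using le_weighted_l1_norm[OF diff] by simp
  have "(\<lambda>j. \<Sum>m<n. \<bar>L m - e j m\<bar> * N (unit_vec m)) \<longlonglongrightarrow> (\<Sum>m<n. \<bar>L m - L m\<bar> * N (unit_vec m))"
    using lim by (intro tendsto_intros) auto
  then show "(\<lambda>j. \<Sum>m<n. \<bar>L m - e j m\<bar> * N (unit_vec m)) \<longlonglongrightarrow> 0"
    by simp
qed (rule tendsto_const)

lemma ex_l1_unit_norm_less:
  assumes d: "d \<in> Vec n" and small: "N d < \<delta> * l1_norm n d"
  shows "\<exists>e\<in>Vec n. l1_norm n e = 1 \<and> N e < \<delta>"
proof -
  define s where "s = l1_norm n d"
  have "0 < \<delta> * s"
    using small nonneg[OF d] unfolding s_def by linarith
  moreover have "s \<ge> 0"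
    unfolding s_def by (simp add: sum_nonneg)
  ultimately have "s > 0"
    by (simp add: zero_less_mult_iff)
  have "(\<lambda>m. (1 / s) * d m) \<in> Vec n"
    using d by (simp add: Vec_def)
  moreover have "l1_norm n (\<lambda>m. (1 / s) * d m) = 1"
    using \<open>s > 0\<close> by (simp add: s_def abs_mult sum_divide_distrib[symmetric])
  moreover have "N (\<lambda>m. (1 / s) * d m) = N d / s"
    using \<open>s > 0\<close> scale[OF d, of "1 / s"] by simp
  moreover have "N d / s < \<delta>"
    using \<open>s > 0\<close> small unfolding s_def[symmetric] by (simp add: pos_divide_less_eq)
  ultimately show ?thesis
    by (intro bexI[of _ "\<lambda>m. (1 / s) * d m"]) simp_all
qed

lemma l1_norm_le_norm:
  "\<exists>\<alpha>>0. \<forall>d\<in>Vec n. \<alpha> * l1_norm n d \<le> N d"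
proof (rule ccontr)
  assume "\<not> ?thesis"
  then have no_bound: "\<forall>\<alpha>>0. \<exists>d\<in>Vec n. N d < \<alpha> * l1_norm n d"
    by (auto simp: not_le)
  have "\<exists>e\<in>Vec n. l1_norm n e = 1 \<and> N e < 1 / (real j + 1)" for j
  proof -
    have "1 / (real j + 1) > 0"
      by simp
    with no_bound obtain d where "d \<in> Vec n" "N d < 1 / (real j + 1) * l1_norm n d"
      by blast
    then show ?thesis
      by (rule ex_l1_unit_norm_less)
  qed
  then obtain e where e: "\<And>j. e j \<in> Vec n" and e_unit: "\<And>j. l1_norm n (e j) = 1"
    and e_small: "\<And>j. N (e j) < 1 / (real j + 1)"
    by metis
  obtain r l where r: "strict_mono r" and l: "\<forall>m<n. (\<lambda>j. e (r j) m) \<longlonglongrightarrow> l m"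
    using bounded_seq_convergent_coords[of e 1 n] abs_le_l1_norm[OF e] e_unit by metis
  define L where "L = (\<lambda>m. if m < n then l m else 0)"
  have L: "L \<in> Vec n"
    by (simp add: L_def Vec_def)
  have lim: "(\<lambda>j. e (r j) m) \<longlonglongrightarrow> L m" if "m < n" for m
    using l that by (simp add: L_def)
  have "(\<lambda>j. l1_norm n (e (r j))) \<longlonglongrightarrow> l1_norm n L"
    using lim by (intro tendsto_intros) auto
  then have "l1_norm n L = 1"
    using e_unit by (simp add: LIMSEQ_const_iff)
  then have "N L > 0"
    using nonneg[OF L] zero_iff[OF L] by force
  have "N L \<le> 1 / (real (r j) + 1) + N (\<lambda>m. L m - e (r j) m)" for j
  proof -
    have diff: "(\<lambda>m. L m - e (r j) m) \<in> Vec n"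
      using L e by (simp add: Vec_def)
    have "N L = N (\<lambda>m. e (r j) m + (L m - e (r j) m))"
      by simp
    also have "\<dots> \<le> N (e (r j)) + N (\<lambda>m. L m - e (r j) m)"
      by (rule triangle[OF e diff])
    finally show ?thesis
      using e_small[of "r j"] by simp
  qed
  moreover have "(\<lambda>j. 1 / (real (r j) + 1) + N (\<lambda>m. L m - e (r j) m)) \<longlonglongrightarrow> 0"
  proof -
    have "(\<lambda>j. 1 / (real j + 1)) \<longlonglongrightarrow> 0"
      using LIMSEQ_inverse_real_of_nat by (simp add: inverse_eq_divide add.commute)
    from tendsto_add[OF LIMSEQ_subseq_LIMSEQ[OF this r] tendsto_zero_coordwise[OF e L lim]]
    show ?thesis by (simp add: o_def)
  qed
  ultimately have "N L \<le> 0"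
    by (intro LIMSEQ_le_const) auto
  with \<open>N L > 0\<close> show False by simp
qed

lemma dual_norm_bdd_above: "bdd_above {ip n v d | d. d \<in> Vec n \<and> N d \<le> 1}"
proof -
  obtain \<alpha> where \<alpha>: "\<alpha> > 0" "\<And>d. d \<in> Vec n \<Longrightarrow> \<alpha> * l1_norm n d \<le> N d"
    using l1_norm_le_norm by blast
  have "ip n v d \<le> l1_norm n v / \<alpha>" if d: "d \<in> Vec n" "N d \<le> 1" for d
  proof -
    have bound: "l1_norm n d \<le> 1 / \<alpha>"
      using \<alpha> d by (simp add: field_simps) (meson order_trans)
    have "ip n v d \<le> (\<Sum>m<n. \<bar>v m\<bar> * \<bar>d m\<bar>)"
      unfolding ip_def by (rule sum_mono) (metis abs_ge_self abs_mult)
    also have "\<dots> \<le> (\<Sum>m<n. \<bar>v m\<bar> * (1 / \<alpha>))"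
      using abs_le_l1_norm[OF d(1)] bound by (intro sum_mono mult_left_mono) (auto intro: order_trans)
    finally show ?thesis
      by (simp add: sum_divide_distrib)
  qed
  then show ?thesis
    by (intro bdd_aboveI) blast
qed

lemma ip_le_dual_norm: "d \<in> Vec n \<Longrightarrow> N d \<le> 1 \<Longrightarrow> ip n v d \<le> dual_norm n N v"
  unfolding dual_norm_def by (intro cSup_upper dual_norm_bdd_above) auto

lemma ip_le_on_ball:
  assumes x: "x \<in> Vec n" and y: "y \<in> Vec n" and ball: "N (\<lambda>m. y m - x m) \<le> \<epsilon>" and "\<epsilon> > 0"
  shows "ip n v y \<le> ip n v x + \<epsilon> * dual_norm n N v"
proof -
  define d where "d = (\<lambda>m. (1 / \<epsilon>) * (y m - x m))"
  have d: "d \<in> Vec n"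
    using x y by (simp add: Vec_def d_def)
  have "N d = N (\<lambda>m. y m - x m) / \<epsilon>"
    using x y \<open>\<epsilon> > 0\<close> unfolding d_def by (subst scale) (auto simp: Vec_def)
  with ball \<open>\<epsilon> > 0\<close> have "N d \<le> 1"
    by simp
  moreover have "ip n v y = ip n v x + \<epsilon> * ip n v d"
    using \<open>\<epsilon> > 0\<close> by (simp add: ip_def d_def sum_distrib_left sum.distrib[symmetric] algebra_simps)
  ultimately show ?thesis
    using ip_le_dual_norm[OF d] \<open>\<epsilon> > 0\<close> by simp
qed

end

lemma dual_network_Vec:
  fixes k i :: nat
  assumes g_maps: "\<forall>i j. 1 \<le> i \<and> i < j \<and> j \<le> k \<longrightarrow> (\<forall>v\<in>Vec (n j). g i j v \<in> Vec (n i))"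
    and nu_k: "\<nu> k \<in> Vec (n k)"
    and nu_i: "\<forall>i\<in>{1..k-1}. \<nu> i = (\<lambda>m. \<Sum>j\<in>{i+1..k}. g i j (\<nu> j) m)"
  shows "1 \<le> i \<Longrightarrow> i \<le> k \<Longrightarrow> \<nu> i \<in> Vec (n i)"
proof (induction "k - i" arbitrary: i rule: less_induct)
  case less
  show ?case
  proof (cases "i = k")
    case True
    with nu_k show ?thesis by simp
  next
    case False
    with less.prems nu_i have "\<nu> i = (\<lambda>m. \<Sum>j\<in>{i+1..k}. g i j (\<nu> j) m)"
      by auto
    moreover have "g i j (\<nu> j) \<in> Vec (n i)" if "j \<in> {i+1..k}" for j
      using that less g_maps by auto
    ultimately show ?thesis
      using Vec_sum[of "{i+1..k}" "\<lambda>j. g i j (\<nu> j)"] by simp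
  qed
qed

lemma feasible_Vec:
  fixes k i :: nat
  assumes f_maps: "\<forall>i j. 1 \<le> j \<and> j < i \<and> i \<le> k \<longrightarrow> (\<forall>v\<in>Vec (n j). f i j v \<in> Vec (n i))"
    and z1: "z 1 \<in> Vec (n 1)"
    and zi: "\<forall>i\<in>{2..k}. z i = (\<lambda>m. \<Sum>j\<in>{1..i-1}. f i j (z j) m)"
  shows "1 \<le> i \<Longrightarrow> i \<le> k \<Longrightarrow> z i \<in> Vec (n i)"
proof (induction i rule: less_induct)
  case (less i)
  show ?case
  proof (cases "i = 1")
    case True
    with z1 show ?thesis by simp
  next
    case False
    with less.prems zi have "z i = (\<lambda>m. \<Sum>j\<in>{1..i-1}. f i j (z j) m)"
      by auto
    moreover have "f i j (z j) \<in> Vec (n i)" if "j \<in> {1..i-1}" for j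
      using that less f_maps by auto
    ultimately show ?thesis
      using Vec_sum[of "{1..i-1}" "\<lambda>j. f i j (z j)"] by simp
  qed
qed

lemma le_chi_star:
  fixes k i :: nat
  shows "z \<in> Vec (n i) \<Longrightarrow>
     ereal (ip (n i) (\<nu> i) z + (\<Sum>j\<in>{i+1..k}. ip (n j) (\<nu> j) (f j i z))) \<le> chi_star n f k i \<nu>"
  unfolding chi_star_def by (rule SUP_upper)

lemma layer_bound:
  fixes k i :: nat
  assumes "chi_star n f k i (\<nu>(i := (\<lambda>m. - \<nu> i m))) \<le> ereal H" and "z \<in> Vec (n i)"
  shows "- ip (n i) (\<nu> i) z + (\<Sum>j\<in>{i+1..k}. ip (n j) (\<nu> j) (f j i z)) \<le> H"
proof -
  have "ereal (- ip (n i) (\<nu> i) z + (\<Sum>j\<in>{i+1..k}. ip (n j) (\<nu> j) (f j i z)))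
      \<le> chi_star n f k i (\<nu>(i := (\<lambda>m. - \<nu> i m)))"
    using le_chi_star[where \<nu> = "\<nu>(i := (\<lambda>m. - \<nu> i m))" and k = k and f = f and n = n and i = i, OF assms(2)]
    by (simp add: ip_uminus_left)
  also have "\<dots> \<le> ereal H"
    by (rule assms(1))
  finally show ?thesis
    by simp
qed

lemma sum_telescope_ivl:
  fixes a :: "nat \<Rightarrow> 'a::ab_group_add"
  assumes "k \<ge> 1"
  shows "(\<Sum>j\<in>{2..k}. a j) - (\<Sum>i\<in>{1..k-1}. a i) = a k - a 1"
proof -
  have "(\<Sum>i\<in>{1..k}. a i) = a 1 + (\<Sum>j\<in>{2..k}. a j)"
    using sum.atLeast_Suc_atMost[of 1 k a] assms by (simp add: numeral_2_eq_2)
  moreover have "(\<Sum>i\<in>{1..k}. a i) = (\<Sum>i\<in>{1..k-1}. a i) + a k"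
    using sum.cl_ivl_Suc[of a 1 "k - 1"] assms by simp
  ultimately show ?thesis
    by (simp add: algebra_simps)
qed

lemma lagrangian_telescopes:
  fixes k :: nat and f :: "nat \<Rightarrow> nat \<Rightarrow> (nat \<Rightarrow> real) \<Rightarrow> (nat \<Rightarrow> real)"
    and z :: "nat \<Rightarrow> nat \<Rightarrow> real"
  assumes "k \<ge> 2" and zi: "\<forall>i\<in>{2..k}. z i = (\<lambda>m. \<Sum>j\<in>{1..i-1}. f i j (z j) m)"
  shows "(\<Sum>i\<in>{1..k-1}. - ip (n i) (\<nu> i) (z i) + (\<Sum>j\<in>{i+1..k}. ip (n j) (\<nu> j) (f j i (z i))))
       = ip (n k) (\<nu> k) (z k) - ip (n 1) (\<nu> 1) (z 1)"
proof -
  define a where "a j = ip (n j) (\<nu> j) (z j)" for j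
  define G where "G i j = ip (n j) (\<nu> j) (f j i (z i))" for i j
  have "(\<Sum>i\<in>{1..k-1}. \<Sum>j\<in>{i+1..k}. G i j) = (\<Sum>i\<in>{1..k}. \<Sum>j\<in>{Suc i..k}. G i j)"
    using sum.cl_ivl_Suc[of "\<lambda>i. \<Sum>j\<in>{Suc i..k}. G i j" 1 "k - 1"] \<open>k \<ge> 2\<close> by simp
  also have "\<dots> = (\<Sum>j\<in>{1..k}. \<Sum>i\<in>{1..<j}. G i j)"
    by (rule sum_triangle_swap)
  also have "\<dots> = (\<Sum>j\<in>{2..k}. \<Sum>i\<in>{1..<j}. G i j)"
    using sum.atLeast_Suc_atMost[of 1 k "\<lambda>j. \<Sum>i\<in>{1..<j}. G i j"] \<open>k \<ge> 2\<close>
    by (simp add: numeral_2_eq_2)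
  also have "\<dots> = (\<Sum>j\<in>{2..k}. a j)"
  proof (rule sum.cong)
    fix j assume j: "j \<in> {2..k}"
    then have "{1..<j} = {1..j-1}" by auto
    then show "(\<Sum>i\<in>{1..<j}. G i j) = a j"
      unfolding a_def G_def zi[rule_format, OF j] ip_sum_right by simp
  qed simp
  finally show ?thesis
    using sum_telescope_ivl[of k a] \<open>k \<ge> 2\<close>
    by (simp add: a_def G_def sum_subtractf)
qed

theorem theorem1:
  fixes k :: nat and n :: "nat \<Rightarrow> nat"
    and f g :: "nat \<Rightarrow> nat \<Rightarrow> (nat \<Rightarrow> real) \<Rightarrow> (nat \<Rightarrow> real)"
    and h :: "nat \<Rightarrow> (nat \<Rightarrow> nat \<Rightarrow> real) \<Rightarrow> real"
    and N :: "(nat \<Rightarrow> real) \<Rightarrow> real"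
    and x c :: "nat \<Rightarrow> real" and \<epsilon> :: real
    and \<nu> z :: "nat \<Rightarrow> nat \<Rightarrow> real"
  assumes k2: "k \<ge> 2"
    and npos: "\<forall>i\<in>{1..k}. n i > 0"
    and f_maps: "\<forall>i j. 1 \<le> j \<and> j < i \<and> i \<le> k \<longrightarrow> (\<forall>v\<in>Vec (n j). f i j v \<in> Vec (n i))"
    and g_maps: "\<forall>i j. 1 \<le> i \<and> i < j \<and> j \<le> k \<longrightarrow> (\<forall>v\<in>Vec (n j). g i j v \<in> Vec (n i))"
    and hbound: "\<forall>i\<in>{1..k-1}. \<forall>\<mu>.
        (\<forall>j\<in>{i+1..k}. \<mu> j \<in> Vec (n j)) \<longrightarrow>
        \<mu> i = (\<lambda>m. \<Sum>j\<in>{i+1..k}. g i j (\<mu> j) m) \<longrightarrow>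
        chi_star n f k i (\<mu>(i := (\<lambda>m. - \<mu> i m))) \<le> ereal (h i (restr i k \<mu>))"
    and norm: "is_norm_on (n 1) N"
    and x: "x \<in> Vec (n 1)" and eps: "\<epsilon> > 0" and c: "c \<in> Vec (n k)"
    and nu_k: "\<nu> k = (\<lambda>m. - c m)"
    and nu_i: "\<forall>i\<in>{1..k-1}. \<nu> i = (\<lambda>m. \<Sum>j\<in>{i+1..k}. g i j (\<nu> j) m)"
    and z1: "z 1 \<in> Vec (n 1)" and z1ball: "N (\<lambda>m. z 1 m - x m) \<le> \<epsilon>"
    and zi: "\<forall>i\<in>{2..k}. z i = (\<lambda>m. \<Sum>j\<in>{1..i-1}. f i j (z j) m)"
  shows "ip (n k) c (z k) \<ge>
           - ip (n 1) (\<nu> 1) x - \<epsilon> * dual_norm (n 1) N (\<nu> 1)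
           - (\<Sum>i\<in>{1..k-1}. h i (restr i k \<nu>))"
proof -
  interpret vec_norm "n 1" N
    by (rule vec_norm.intro) (rule norm)
  have "\<nu> k \<in> Vec (n k)"
    using c by (simp add: nu_k Vec_def)
  then have nu_Vec: "\<nu> i \<in> Vec (n i)" if "i \<in> {1..k}" for i
    using dual_network_Vec[OF g_maps _ nu_i] that by simp
  have z_Vec: "z i \<in> Vec (n i)" if "i \<in> {1..k}" for i
    using feasible_Vec[OF f_maps z1 zi] that by simp
  have "- ip (n i) (\<nu> i) (z i) + (\<Sum>j\<in>{i+1..k}. ip (n j) (\<nu> j) (f j i (z i))) \<le> h i (restr i k \<nu>)"
    if i: "i \<in> {1..k-1}" for i
  proof (rule layer_bound)
    show "chi_star n f k i (\<nu>(i := (\<lambda>m. - \<nu> i m))) \<le> ereal (h i (restr i k \<nu>))"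
      using hbound i nu_Vec nu_i by simp
    show "z i \<in> Vec (n i)"
      using z_Vec i by auto
  qed
  then have "ip (n k) (\<nu> k) (z k) - ip (n 1) (\<nu> 1) (z 1) \<le> (\<Sum>i\<in>{1..k-1}. h i (restr i k \<nu>))"
    unfolding lagrangian_telescopes[where n = n and \<nu> = \<nu> and f = f and z = z, OF k2 zi, symmetric] by (rule sum_mono)
  moreover have "ip (n k) (\<nu> k) (z k) = - ip (n k) c (z k)"
    by (simp add: nu_k ip_uminus_left)
  moreover have "ip (n 1) (\<nu> 1) (z 1) \<le> ip (n 1) (\<nu> 1) x + \<epsilon> * dual_norm (n 1) N (\<nu> 1)"
    by (rule ip_le_on_ball[OF x z1 z1ball eps])
  ultimately show ?thesis
    by linarith
qed

end
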